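(* Let $p$ be an odd prime, $r\ge3$ with $p\nmid r$, $d\ge2$, and let $G=V\rtimes_\psi D$ with $V=\mathbb{Z}_p^d$, $D=\mathrm{D}_{2r}$ and $\psi:D\to\mathrm{GL}(V)$ an irreducible representation over $\mathbb{F}_p$. Let $x,y\in D$ be involutions with $D=\langle x,y\rangle$, and let $v,v'$ be non-identity elements of $\mathrm{C}_V(x)$. Then $\mathsf{RotaMap}(G,vx,y)\cong\mathsf{RotaMap}(G,v'x,y)$.
   Context: $\mathrm{D}_{2r}$ is the dihedral group of order $2r$; $V\rtimes_\psi D$ is the semidirect product where $D$ acts on $V=\mathbb{F}_p^d$ via $\psi$, and $\mathrm{C}_V(x)$ is the centralizer of $x$ in $V$. For a group $G$ and $\rho,\tau\in G$ with $G=\langle\rho,\tau\rangle$ and $|\tau|=2$ (a rotary pair), $\mathsf{RotaMap}(G,\rho,\tau)$ is the map whose vertices, edges and faces are the left cosets of $\langle\rho\rangle$, $\langle\tau\rangle$ and $\langle\rho\tau\rangle$ in $G$ respectively, two objects being incident iff their intersection is nonempty; it is an orientable map on which $G$ acts (by left multiplication) regularly on arcs with cyclic vertex and face stabilizers. Isomorphism means isomorphism of maps. *)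

theory Defs
  imports "HOL-Algebra.Algebra"
begin

text \<open>Vectors of F_p^d are represented as functions nat => int, with entries in {0..<p}
  at coordinates < d and 0 elsewhere; addition is componentwise mod p.\<close>

definition Vset :: "nat \<Rightarrow> nat \<Rightarrow> (nat \<Rightarrow> int) set" where
  "Vset p d = {v. \<forall>i. (i < d \<longrightarrow> 0 \<le> v i \<and> v i < int p) \<and> (d \<le> i \<longrightarrow> v i = 0)}"

definition vzero :: "nat \<Rightarrow> int" where
  "vzero = (\<lambda>i. 0)"

definition vadd :: "nat \<Rightarrow> (nat \<Rightarrow> int) \<Rightarrow> (nat \<Rightarrow> int) \<Rightarrow> (nat \<Rightarrow> int)" where
  "vadd p u w = (\<lambda>i. (u i + w i) mod int p)"

definition vsmult :: "nat \<Rightarrow> int \<Rightarrow> (nat \<Rightarrow> int) \<Rightarrow> (nat \<Rightarrow> int)" where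
  "vsmult p c u = (\<lambda>i. (c * u i) mod int p)"

definition linear_Fp :: "nat \<Rightarrow> nat \<Rightarrow> ((nat \<Rightarrow> int) \<Rightarrow> (nat \<Rightarrow> int)) \<Rightarrow> bool" where
  "linear_Fp p d f \<longleftrightarrow>
     (\<forall>u\<in>Vset p d. \<forall>w\<in>Vset p d. f (vadd p u w) = vadd p (f u) (f w)) \<and>
     (\<forall>c\<in>{0..<int p}. \<forall>u\<in>Vset p d. f (vsmult p c u) = vsmult p c (f u))"

definition subspace_Fp :: "nat \<Rightarrow> nat \<Rightarrow> (nat \<Rightarrow> int) set \<Rightarrow> bool" where
  "subspace_Fp p d W \<longleftrightarrow> W \<subseteq> Vset p d \<and> vzero \<in> W \<and>
     (\<forall>u\<in>W. \<forall>w\<in>W. vadd p u w \<in> W) \<and>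
     (\<forall>c\<in>{0..<int p}. \<forall>u\<in>W. vsmult p c u \<in> W)"

text \<open>(k, False) is rho^k, (k, True) is rho^k sigma, with sigma rho sigma = rho^-1.\<close>
definition dihedral :: "nat \<Rightarrow> (nat \<times> bool) monoid" where
  "dihedral r = \<lparr> carrier = {0..<r} \<times> UNIV,
     monoid.mult = (\<lambda>(a, s) (b, t). ((a + (if s then r - b else b)) mod r, s \<noteq> t)),
     one = (0, False) \<rparr>"

definition is_rep :: "nat \<Rightarrow> nat \<Rightarrow> ('g, 'b) monoid_scheme \<Rightarrow>
    ('g \<Rightarrow> (nat \<Rightarrow> int) \<Rightarrow> (nat \<Rightarrow> int)) \<Rightarrow> bool" where
  "is_rep p d D \<psi> \<longleftrightarrow> \<psi> \<in> hom D (BijGroup (Vset p d)) \<and>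
     (\<forall>g\<in>carrier D. linear_Fp p d (\<psi> g))"

definition irreducible_rep :: "nat \<Rightarrow> nat \<Rightarrow> ('g, 'b) monoid_scheme \<Rightarrow>
    ('g \<Rightarrow> (nat \<Rightarrow> int) \<Rightarrow> (nat \<Rightarrow> int)) \<Rightarrow> bool" where
  "irreducible_rep p d D \<psi> \<longleftrightarrow> is_rep p d D \<psi> \<and> Vset p d \<noteq> {vzero} \<and>
     (\<forall>W. subspace_Fp p d W \<and> (\<forall>g\<in>carrier D. \<psi> g ` W \<subseteq> W) \<longrightarrow>
          W = {vzero} \<or> W = Vset p d)"

text \<open>V \<rtimes>_psi D, elements (v, a) standing for v a.\<close>
definition semidirect :: "nat \<Rightarrow> nat \<Rightarrow> ('g, 'b) monoid_scheme \<Rightarrow>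
    ('g \<Rightarrow> (nat \<Rightarrow> int) \<Rightarrow> (nat \<Rightarrow> int)) \<Rightarrow> ((nat \<Rightarrow> int) \<times> 'g) monoid" where
  "semidirect p d D \<psi> = \<lparr> carrier = Vset p d \<times> carrier D,
     monoid.mult = (\<lambda>(u, a) (w, b). (vadd p u (\<psi> a w), a \<otimes>\<^bsub>D\<^esub> b)),
     one = (vzero, \<one>\<^bsub>D\<^esub>) \<rparr>"

text \<open>C_V(x): elements of V (embedded as (v,1)) commuting in G with x (embedded as (0,x)).\<close>
definition centraliser_V :: "nat \<Rightarrow> nat \<Rightarrow> ('g, 'b) monoid_scheme \<Rightarrow>
    ('g \<Rightarrow> (nat \<Rightarrow> int) \<Rightarrow> (nat \<Rightarrow> int)) \<Rightarrow> 'g \<Rightarrow> (nat \<Rightarrow> int) set" where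
  "centraliser_V p d D \<psi> x = {v \<in> Vset p d.
     (v, \<one>\<^bsub>D\<^esub>) \<otimes>\<^bsub>semidirect p d D \<psi>\<^esub> (vzero, x) =
     (vzero, x) \<otimes>\<^bsub>semidirect p d D \<psi>\<^esub> (v, \<one>\<^bsub>D\<^esub>)}"

definition involution :: "('g, 'b) monoid_scheme \<Rightarrow> 'g \<Rightarrow> bool" where
  "involution D x \<longleftrightarrow> x \<in> carrier D \<and> x \<noteq> \<one>\<^bsub>D\<^esub> \<and> x \<otimes>\<^bsub>D\<^esub> x = \<one>\<^bsub>D\<^esub>"

definition rota_vertices :: "('a, 'b) monoid_scheme \<Rightarrow> 'a \<Rightarrow> 'a \<Rightarrow> 'a set set" where
  "rota_vertices G \<rho> \<tau> = (\<lambda>g. g <#\<^bsub>G\<^esub> generate G {\<rho>}) ` carrier G"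

definition rota_edges :: "('a, 'b) monoid_scheme \<Rightarrow> 'a \<Rightarrow> 'a \<Rightarrow> 'a set set" where
  "rota_edges G \<rho> \<tau> = (\<lambda>g. g <#\<^bsub>G\<^esub> generate G {\<tau>}) ` carrier G"

definition rota_faces :: "('a, 'b) monoid_scheme \<Rightarrow> 'a \<Rightarrow> 'a \<Rightarrow> 'a set set" where
  "rota_faces G \<rho> \<tau> = (\<lambda>g. g <#\<^bsub>G\<^esub> generate G {\<rho> \<otimes>\<^bsub>G\<^esub> \<tau>}) ` carrier G"

text \<open>Isomorphism of RotaMap(G1,rho1,tau1) and RotaMap(G2,rho2,tau2): type-preserving
  bijections of vertices, edges and faces preserving and reflecting incidence
  (incidence = nonempty intersection).\<close>
definition incidence_preserving :: "'a set set \<Rightarrow> 'a set set \<Rightarrow> ('a set \<Rightarrow> 'c set) \<Rightarrow>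
    ('a set \<Rightarrow> 'c set) \<Rightarrow> bool" where
  "incidence_preserving A B f g \<longleftrightarrow>
     (\<forall>a\<in>A. \<forall>b\<in>B. (a \<inter> b \<noteq> {}) \<longleftrightarrow> (f a \<inter> g b \<noteq> {}))"

definition rota_map_iso :: "('a, 'b) monoid_scheme \<Rightarrow> 'a \<Rightarrow> 'a \<Rightarrow>
    ('c, 'e) monoid_scheme \<Rightarrow> 'c \<Rightarrow> 'c \<Rightarrow> bool" where
  "rota_map_iso G1 \<rho>1 \<tau>1 G2 \<rho>2 \<tau>2 \<longleftrightarrow>
    (\<exists>fv fe ff.
       bij_betw fv (rota_vertices G1 \<rho>1 \<tau>1) (rota_vertices G2 \<rho>2 \<tau>2) \<and>
       bij_betw fe (rota_edges G1 \<rho>1 \<tau>1) (rota_edges G2 \<rho>2 \<tau>2) \<and>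
       bij_betw ff (rota_faces G1 \<rho>1 \<tau>1) (rota_faces G2 \<rho>2 \<tau>2) \<and>
       incidence_preserving (rota_vertices G1 \<rho>1 \<tau>1) (rota_edges G1 \<rho>1 \<tau>1) fv fe \<and>
       incidence_preserving (rota_vertices G1 \<rho>1 \<tau>1) (rota_faces G1 \<rho>1 \<tau>1) fv ff \<and>
       incidence_preserving (rota_edges G1 \<rho>1 \<tau>1) (rota_faces G1 \<rho>1 \<tau>1) fe ff)"

end

theory Submission
  imports Defs
begin

(* Since x, y generate D_2r and r >= 3, x is a reflection. Let E be the algebra of F_p-linear
   maps V -> V commuting with psi. For a rotation k, conjugation in D_2r sends k to k or k^-1, so
   psi(k) + psi(k^-1) lies in E; and for every g, psi(g) v + psi(x) psi(g) v has this form applied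
   to v, because psi(x) v = v. Irreducibility spreads this from the orbit of v to all of V, so
   w + psi(x) w lies in E v for every w; for w = v' this is 2 v', and p is odd, so v' = T v with
   T in E. By Schur's lemma T is bijective, so (u, a) |-> (T u, a) is an automorphism of G fixing
   y and sending v x to v' x, and automorphisms carry coset maps isomorphically. *)

section \<open>Rotary maps of isomorphic groups\<close>

lemma hom_image_l_coset:
  assumes "\<alpha> \<in> hom G H" "g \<in> carrier G" "S \<subseteq> carrier G"
  shows "\<alpha> ` (g <#\<^bsub>G\<^esub> S) = \<alpha> g <#\<^bsub>H\<^esub> \<alpha> ` S"
  using assms by (force simp: l_coset_def hom_mult)

lemma (in group) cosets_generate_subset:
  assumes "a \<in> carrier G"
  shows "\<Union> ((\<lambda>g. g <# generate G {a}) ` carrier G) \<subseteq> carrier G"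
  using assms generate_incl[of "{a}"] l_coset_subset_G by auto

lemma iso_image_cosets_generate:
  assumes G: "group G" and H: "group H" and \<alpha>: "\<alpha> \<in> iso G H" and a: "a \<in> carrier G"
  shows "bij_betw ((`) \<alpha>) ((\<lambda>g. g <#\<^bsub>G\<^esub> generate G {a}) ` carrier G)
                          ((\<lambda>h. h <#\<^bsub>H\<^esub> generate H {\<alpha> a}) ` carrier H)"
proof -
  interpret group_hom G H \<alpha>
    using G H \<alpha> by (simp add: group_hom_def group_hom_axioms_def iso_def)
  have hom: "\<alpha> \<in> hom G H" and bij: "bij_betw \<alpha> (carrier G) (carrier H)"
    using \<alpha> by (auto simp: iso_def)
  have sub: "generate G {a} \<subseteq> carrier G"
    using a by (simp add: G.generate_incl)
  have "(`) \<alpha> ` (\<lambda>g. g <#\<^bsub>G\<^esub> generate G {a}) ` carrier G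
      = (\<lambda>g. \<alpha> g <#\<^bsub>H\<^esub> generate H {\<alpha> a}) ` carrier G"
    using hom_image_l_coset[OF hom _ sub] generate_img[of "{a}"] a by (simp add: image_image)
  also have "\<dots> = (\<lambda>h. h <#\<^bsub>H\<^esub> generate H {\<alpha> a}) ` \<alpha> ` carrier G"
    by (simp add: image_image)
  finally show ?thesis
    using inj_on_image[OF inj_on_subset[OF _ G.cosets_generate_subset[OF a]], of \<alpha>] bij
    by (simp add: bij_betw_def)
qed

lemma incidence_preserving_image:
  assumes "inj_on \<alpha> C" "\<Union>A \<subseteq> C" "\<Union>B \<subseteq> C"
  shows "incidence_preserving A B ((`) \<alpha>) ((`) \<alpha>)"
  unfolding incidence_preserving_def
proof (intro ballI)
  fix a b assume "a \<in> A" "b \<in> B"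
  then have "\<alpha> ` (a \<inter> b) = \<alpha> ` a \<inter> \<alpha> ` b"
    using assms by (intro inj_on_image_Int) auto
  then show "(a \<inter> b \<noteq> {}) = (\<alpha> ` a \<inter> \<alpha> ` b \<noteq> {})" by auto
qed

lemma rota_map_iso_by_iso:
  assumes G: "group G" and H: "group H" and \<alpha>: "\<alpha> \<in> iso G H"
    and \<rho>: "\<rho> \<in> carrier G" and \<tau>: "\<tau> \<in> carrier G"
  shows "rota_map_iso G \<rho> \<tau> H (\<alpha> \<rho>) (\<alpha> \<tau>)"
proof -
  have \<rho>\<tau>: "\<rho> \<otimes>\<^bsub>G\<^esub> \<tau> \<in> carrier G"
    using \<rho> \<tau> by (simp add: group.is_monoid[OF G] monoid.m_closed)
  have "\<alpha> (\<rho> \<otimes>\<^bsub>G\<^esub> \<tau>) = \<alpha> \<rho> \<otimes>\<^bsub>H\<^esub> \<alpha> \<tau>"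
    using \<alpha> \<rho> \<tau> by (simp add: iso_def hom_mult)
  then have bij: "bij_betw ((`) \<alpha>) (rota_vertices G \<rho> \<tau>) (rota_vertices H (\<alpha> \<rho>) (\<alpha> \<tau>))"
      "bij_betw ((`) \<alpha>) (rota_edges G \<rho> \<tau>) (rota_edges H (\<alpha> \<rho>) (\<alpha> \<tau>))"
      "bij_betw ((`) \<alpha>) (rota_faces G \<rho> \<tau>) (rota_faces H (\<alpha> \<rho>) (\<alpha> \<tau>))"
    unfolding rota_vertices_def rota_edges_def rota_faces_def
    using iso_image_cosets_generate[OF G H \<alpha>] \<rho> \<tau> \<rho>\<tau> by metis+
  have "incidence_preserving A B ((`) \<alpha>) ((`) \<alpha>)"
    if "A \<in> {rota_vertices G \<rho> \<tau>, rota_edges G \<rho> \<tau>, rota_faces G \<rho> \<tau>}"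
       "B \<in> {rota_vertices G \<rho> \<tau>, rota_edges G \<rho> \<tau>, rota_faces G \<rho> \<tau>}" for A B
    using that \<alpha> \<rho> \<tau> \<rho>\<tau> group.cosets_generate_subset[OF G]
    unfolding rota_vertices_def rota_edges_def rota_faces_def
    by (intro incidence_preserving_image[of _ "carrier G"]) (auto simp: iso_def bij_betw_def)
  then show ?thesis
    unfolding rota_map_iso_def using bij by blast
qed

section \<open>The dihedral group\<close>

lemma (in group) commutes_with_generate:
  assumes a: "a \<in> carrier G" and S: "S \<subseteq> carrier G" and comm: "\<forall>s\<in>S. a \<otimes> s = s \<otimes> a"
    and h: "h \<in> generate G S"
  shows "a \<otimes> h = h \<otimes> a"
  using h
proof induction
  case one
  then show ?case
    using a by simp
next
  case (incl s)
  then show ?case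
    using comm by blast
next
  case (inv s)
  then have s: "s \<in> carrier G" "a \<otimes> s = s \<otimes> a"
    using S comm by auto
  have "a \<otimes> inv s = inv s \<otimes> (s \<otimes> a) \<otimes> inv s"
    using a s(1) by (simp add: m_assoc[symmetric])
  also have "\<dots> = inv s \<otimes> (a \<otimes> s) \<otimes> inv s"
    using s(2) by simp
  also have "\<dots> = inv s \<otimes> a"
    using a s(1) by (simp add: m_assoc)
  finally show ?case .
next
  case (eng h1 h2)
  have h: "h1 \<in> carrier G" "h2 \<in> carrier G"
    using eng.hyps S generate_in_carrier by auto
  have "a \<otimes> (h1 \<otimes> h2) = h1 \<otimes> (a \<otimes> h2)"
    using a h eng.IH(1) by (simp add: m_assoc[symmetric])
  also have "\<dots> = h1 \<otimes> h2 \<otimes> a"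
    using a h eng.IH(2) by (simp add: m_assoc)
  finally show ?case .
qed

lemma dihedral_mult [simp]:
  "(a, s) \<otimes>\<^bsub>dihedral r\<^esub> (b, t) = ((a + (if s then r - b else b)) mod r, s \<noteq> t)"
  by (simp add: dihedral_def)

lemma dihedral_one: "\<one>\<^bsub>dihedral r\<^esub> = (0, False)"
  by (simp add: dihedral_def)

lemma dihedral_carrier: "carrier (dihedral r) = {0..<r} \<times> UNIV"
  by (simp add: dihedral_def)

lemma int_dihedral_rotation:
  assumes "b \<le> r"
  shows "int ((a + (if s then r - b else b)) mod r)
       = (int a + (if s then - int b else int b)) mod int r"
proof (cases s)
  case True
  have "int ((a + (r - b)) mod r) = ((int a - int b) + int r) mod int r"
    using assms by (simp add: zmod_int of_nat_diff algebra_simps)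
  also have "\<dots> = (int a - int b) mod int r"
    by (rule mod_add_self2)
  finally show ?thesis
    using True by simp
qed (simp add: zmod_int)

lemma group_dihedral:
  assumes "0 < r"
  shows "group (dihedral r)"
proof (rule groupI)
  fix g h k
  assume "g \<in> carrier (dihedral r)" "h \<in> carrier (dihedral r)" "k \<in> carrier (dihedral r)"
  then obtain a s b t c u where gh: "g = (a, s)" "h = (b, t)" "k = (c, u)" "b < r" "c < r"
    by (auto simp: dihedral_carrier)
  have "int (((a + (if s then r - b else b)) mod r + (if s \<noteq> t then r - c else c)) mod r)
      = int ((a + (if s then r - (b + (if t then r - c else c)) mod r
                          else (b + (if t then r - c else c)) mod r)) mod r)"
    unfolding int_dihedral_rotation[OF less_imp_le[OF gh(5)]]
      int_dihedral_rotation[OF less_imp_le[OF gh(4)]]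
      int_dihedral_rotation[OF less_imp_le[OF mod_less_divisor[OF assms]]]
    by (cases s; cases t)
      (simp_all add: mod_add_left_eq mod_diff_left_eq mod_add_right_eq mod_diff_right_eq,
       simp_all add: algebra_simps)
  then show "g \<otimes>\<^bsub>dihedral r\<^esub> h \<otimes>\<^bsub>dihedral r\<^esub> k = g \<otimes>\<^bsub>dihedral r\<^esub> (h \<otimes>\<^bsub>dihedral r\<^esub> k)"
    unfolding gh of_nat_eq_iff by auto
next
  fix g assume "g \<in> carrier (dihedral r)"
  then obtain a s where g: "g = (a, s)" "a < r"
    by (auto simp: dihedral_carrier)
  show "\<exists>h\<in>carrier (dihedral r). h \<otimes>\<^bsub>dihedral r\<^esub> g = \<one>\<^bsub>dihedral r\<^esub>"
  proof (cases s)
    case True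
    then show ?thesis
      using g by (intro bexI[of _ g]) (auto simp: dihedral_carrier dihedral_one)
  next
    case False
    then show ?thesis
      using g by (intro bexI[of _ "((r - a) mod r, False)"])
        (auto simp: dihedral_carrier dihedral_one mod_add_left_eq)
  qed
next
  show "\<one>\<^bsub>dihedral r\<^esub> \<in> carrier (dihedral r)"
    using assms by (simp add: dihedral_carrier dihedral_one)
next
  fix g h assume "g \<in> carrier (dihedral r)" "h \<in> carrier (dihedral r)"
  then show "g \<otimes>\<^bsub>dihedral r\<^esub> h \<in> carrier (dihedral r)"
    using assms by (cases g, cases h) (simp add: dihedral_carrier)
next
  fix g assume "g \<in> carrier (dihedral r)"
  then show "\<one>\<^bsub>dihedral r\<^esub> \<otimes>\<^bsub>dihedral r\<^esub> g = g"
    by (cases g) (simp add: dihedral_one dihedral_carrier)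
qed

lemma snd_dihedral_mult [simp]: "snd (g \<otimes>\<^bsub>dihedral r\<^esub> h) \<longleftrightarrow> snd g \<noteq> snd h"
  by (cases g; cases h) simp

lemma dihedral_rotations_commute:
  "\<not> snd g \<Longrightarrow> \<not> snd h \<Longrightarrow> g \<otimes>\<^bsub>dihedral r\<^esub> h = h \<otimes>\<^bsub>dihedral r\<^esub> g"
  by (cases g; cases h) (simp add: add.commute)

lemma dihedral_reflection_inv:
  assumes "0 < r" "g \<in> carrier (dihedral r)" "snd g"
  shows "inv\<^bsub>dihedral r\<^esub> g = g"
proof -
  have "g \<otimes>\<^bsub>dihedral r\<^esub> g = \<one>\<^bsub>dihedral r\<^esub>"
    using assms(2,3) by (cases g) (auto simp: dihedral_carrier dihedral_one)
  then show ?thesis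
    using group.inv_equality[OF group_dihedral[OF assms(1)] _ assms(2,2)] by blast
qed

lemma dihedral_reflection_inverts_rotation:
  assumes r: "0 < r" and g: "g \<in> carrier (dihedral r)" "\<not> snd g"
    and h: "h \<in> carrier (dihedral r)" "snd h"
  shows "h \<otimes>\<^bsub>dihedral r\<^esub> g = inv\<^bsub>dihedral r\<^esub> g \<otimes>\<^bsub>dihedral r\<^esub> h"
proof -
  interpret group "dihedral r"
    using r by (rule group_dihedral)
  have "h \<otimes>\<^bsub>dihedral r\<^esub> g = inv\<^bsub>dihedral r\<^esub> (h \<otimes>\<^bsub>dihedral r\<^esub> g)"
    using dihedral_reflection_inv[OF r m_closed[OF h(1) g(1)]] g h by simp
  also have "\<dots> = inv\<^bsub>dihedral r\<^esub> g \<otimes>\<^bsub>dihedral r\<^esub> h"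
    using dihedral_reflection_inv[OF r h] g h by (simp add: inv_mult_group)
  finally show ?thesis .
qed

lemma dihedral_rotation_involution_central:
  assumes x: "involution (dihedral r) x" "\<not> snd x" and g: "g \<in> carrier (dihedral r)"
  shows "x \<otimes>\<^bsub>dihedral r\<^esub> g = g \<otimes>\<^bsub>dihedral r\<^esub> x"
proof -
  obtain a where a: "x = (a, False)" "0 < a" "a < r" "(a + a) mod r = 0"
    using x by (cases x) (auto simp: involution_def dihedral_carrier dihedral_one)
  have not_less: "\<not> a + a < r"
    using a(2,4) by auto
  then have "(a + a - r) mod r = 0"
    using a(4) by (simp add: le_mod_geq)
  moreover have "a + a - r < r"
    using a(3) by simp
  ultimately have "a + a = r"
    using not_less by simp
  then show ?thesis
    using a(1) by (cases g) (auto simp: add.commute)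
qed

lemma dihedral_generating_involution_reflection:
  assumes r: "3 \<le> r" and x: "involution (dihedral r) x" and y: "involution (dihedral r) y"
    and gen: "generate (dihedral r) {x, y} = carrier (dihedral r)"
  shows "snd x"
proof (rule ccontr)
  assume "\<not> snd x"
  then have x_central: "x \<otimes>\<^bsub>dihedral r\<^esub> g = g \<otimes>\<^bsub>dihedral r\<^esub> x"
    if "g \<in> carrier (dihedral r)" for g
    using dihedral_rotation_involution_central x that by blast
  interpret group "dihedral r"
    using r by (simp add: group_dihedral)
  have xy: "{x, y} \<subseteq> carrier (dihedral r)"
    using x y by (simp add: involution_def)
  have y_central: "y \<otimes>\<^bsub>dihedral r\<^esub> g = g \<otimes>\<^bsub>dihedral r\<^esub> y"
    if "g \<in> carrier (dihedral r)" for g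
    using commutes_with_generate[OF _ xy _ that[folded gen]] x_central xy by auto
  have comm: "g \<otimes>\<^bsub>dihedral r\<^esub> h = h \<otimes>\<^bsub>dihedral r\<^esub> g"
    if "g \<in> carrier (dihedral r)" "h \<in> carrier (dihedral r)" for g h
    using commutes_with_generate[OF that(1) xy _ that(2)[folded gen]] x_central y_central that(1)
    by auto
  have "(1, False) \<in> carrier (dihedral r)" "(0, True) \<in> carrier (dihedral r)"
    using r by (auto simp: dihedral_carrier)
  moreover have "(1, False) \<otimes>\<^bsub>dihedral r\<^esub> (0, True) \<noteq> (0, True) \<otimes>\<^bsub>dihedral r\<^esub> (1, False)"
    using r by simp
  ultimately show False
    using comm by blast
qed

section \<open>The vector space F_p^d\<close>

definition vneg :: "nat \<Rightarrow> (nat \<Rightarrow> int) \<Rightarrow> (nat \<Rightarrow> int)" where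
  "vneg p u = vsmult p (int p - 1) u"

lemma Vset_iff:
  "u \<in> Vset p d \<longleftrightarrow> (\<forall>i. (i < d \<longrightarrow> 0 \<le> u i \<and> u i < int p) \<and> (d \<le> i \<longrightarrow> u i = 0))"
  by (simp add: Vset_def)

lemma Vset_mod: "u \<in> Vset p d \<Longrightarrow> u i mod int p = u i"
  by (cases "i < d") (auto simp: Vset_iff not_less)

lemma vzero_in_Vset: "0 < p \<Longrightarrow> vzero \<in> Vset p d"
  by (simp add: Vset_iff vzero_def)

lemma vadd_in_Vset: "0 < p \<Longrightarrow> u \<in> Vset p d \<Longrightarrow> w \<in> Vset p d \<Longrightarrow> vadd p u w \<in> Vset p d"
  by (simp add: Vset_iff vadd_def)

lemma vsmult_in_Vset: "0 < p \<Longrightarrow> u \<in> Vset p d \<Longrightarrow> vsmult p c u \<in> Vset p d"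
  by (simp add: Vset_iff vsmult_def)

lemma vneg_in_Vset: "0 < p \<Longrightarrow> u \<in> Vset p d \<Longrightarrow> vneg p u \<in> Vset p d"
  by (simp add: vneg_def vsmult_in_Vset)

lemma vadd_commute: "vadd p u w = vadd p w u"
  by (simp add: vadd_def add.commute)

lemma vadd_assoc: "vadd p (vadd p u w) z = vadd p u (vadd p w z)"
  by (simp add: vadd_def mod_add_left_eq mod_add_right_eq add.assoc)

lemma vadd_vadd_swap: "vadd p (vadd p a b) (vadd p c e) = vadd p (vadd p a c) (vadd p b e)"
  by (metis vadd_assoc vadd_commute)

lemma vadd_vzero_left: "u \<in> Vset p d \<Longrightarrow> vadd p vzero u = u"
  by (rule ext) (simp add: vadd_def vzero_def Vset_mod)

lemma vadd_vzero_right: "u \<in> Vset p d \<Longrightarrow> vadd p u vzero = u"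
  by (metis vadd_vzero_left vadd_commute)

lemma vsmult_vadd: "vsmult p c (vadd p u w) = vadd p (vsmult p c u) (vsmult p c w)"
  by (rule ext) (simp add: vsmult_def vadd_def mod_mult_right_eq mod_add_eq distrib_left)

lemma vsmult_commute: "vsmult p c (vsmult p k u) = vsmult p k (vsmult p c u)"
  by (rule ext) (simp add: vsmult_def mod_mult_right_eq mult.left_commute)

lemma vsmult_vzero: "vsmult p c vzero = vzero"
  by (simp add: vsmult_def vzero_def)

lemma vsmult_zero: "vsmult p 0 u = vzero"
  by (simp add: vsmult_def vzero_def)

lemma vadd_vneg: "vadd p u (vneg p u) = vzero"
proof
  fix i
  have "(u i + ((int p - 1) * u i) mod int p) mod int p = (int p * u i) mod int p"
    by (simp add: mod_add_right_eq algebra_simps)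
  then show "vadd p u (vneg p u) i = vzero i"
    by (simp add: vadd_def vneg_def vsmult_def vzero_def)
qed

lemma eq_if_vadd_vneg_eq_vzero:
  assumes "u \<in> Vset p d" "w \<in> Vset p d" "vadd p u (vneg p w) = vzero"
  shows "u = w"
proof
  fix i
  have "(u i + (int p - 1) * w i) mod int p = 0"
    using fun_cong[OF assms(3), of i]
    by (simp add: vadd_def vneg_def vsmult_def vzero_def mod_add_right_eq)
  moreover have "u i + (int p - 1) * w i = (u i - w i) + int p * w i"
    by (simp add: algebra_simps)
  ultimately have "u i mod int p = w i mod int p"
    by (simp add: mod_eq_dvd_iff mod_eq_0_iff_dvd)
  then show "u i = w i"
    using assms(1,2) by (simp add: Vset_mod)
qed

lemma vsmult_half_vadd_self:
  assumes "odd p" "u \<in> Vset p d"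
  shows "vsmult p ((int p + 1) div 2) (vadd p u u) = u"
proof
  fix i
  have "(int p + 1) div 2 * 2 = int p + 1"
    using assms(1) by (auto elim: oddE)
  then have "((int p + 1) div 2 * (u i + u i)) mod int p = (int p * u i + u i) mod int p"
    by (metis (no_types, lifting) distrib_right mult.assoc mult.commute mult_2 mult_1)
  then have "((int p + 1) div 2 * ((u i + u i) mod int p)) mod int p = u i mod int p"
    by (simp add: mod_mult_right_eq)
  then show "vsmult p ((int p + 1) div 2) (vadd p u u) i = u i"
    using assms(2) by (simp add: vsmult_def vadd_def Vset_mod)
qed

lemma finite_Vset: "finite (Vset p d)"
proof -
  have "Vset p d \<subseteq> (\<lambda>f i. if i < d then f i else 0) ` (PiE {..<d} (\<lambda>_. {0..<int p}))"
  proof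
    fix v assume v: "v \<in> Vset p d"
    then have "v = (\<lambda>i. if i < d then restrict v {..<d} i else 0)"
      by (auto simp: Vset_iff)
    moreover have "restrict v {..<d} \<in> PiE {..<d} (\<lambda>_. {0..<int p})"
      using v by (auto simp: Vset_iff)
    ultimately show "v \<in> (\<lambda>f i. if i < d then f i else 0) ` (PiE {..<d} (\<lambda>_. {0..<int p}))"
      by blast
  qed
  then show ?thesis
    by (rule finite_subset) (simp add: finite_PiE)
qed

lemma linear_Fp_vzero:
  assumes "0 < p" "linear_Fp p d T"
  shows "T vzero = vzero"
proof -
  have "T (vsmult p 0 vzero) = vsmult p 0 (T vzero)"
    using assms vzero_in_Vset[OF assms(1)] by (simp add: linear_Fp_def)
  then show ?thesis
    by (simp add: vsmult_zero)
qed

lemma linear_Fp_vneg: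
  "0 < p \<Longrightarrow> linear_Fp p d T \<Longrightarrow> u \<in> Vset p d \<Longrightarrow> T (vneg p u) = vneg p (T u)"
  by (simp add: linear_Fp_def vneg_def)

lemma linear_Fp_id: "linear_Fp p d (\<lambda>w. w)"
  by (simp add: linear_Fp_def)

lemma linear_Fp_vadd:
  "linear_Fp p d S \<Longrightarrow> linear_Fp p d T \<Longrightarrow> linear_Fp p d (\<lambda>w. vadd p (S w) (T w))"
  by (simp add: linear_Fp_def vadd_vadd_swap vsmult_vadd)

lemma linear_Fp_vsmult: "linear_Fp p d T \<Longrightarrow> linear_Fp p d (\<lambda>w. vsmult p c (T w))"
  by (simp add: linear_Fp_def vsmult_vadd vsmult_commute)

lemma subspace_Fp_kernel:
  assumes "0 < p" "linear_Fp p d T"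
  shows "subspace_Fp p d {w \<in> Vset p d. T w = vzero}"
  using assms linear_Fp_vzero[OF assms] vzero_in_Vset[OF assms(1)]
    vadd_vzero_left[OF vzero_in_Vset]
  by (auto simp: subspace_Fp_def linear_Fp_def vadd_in_Vset vsmult_in_Vset vsmult_vzero)

lemma linear_Fp_inj_on:
  assumes p: "0 < p" and T: "linear_Fp p d T" "T ` Vset p d \<subseteq> Vset p d"
    and ker: "\<forall>w\<in>Vset p d. T w = vzero \<longrightarrow> w = vzero"
  shows "inj_on T (Vset p d)"
proof (rule inj_onI)
  fix u w assume u: "u \<in> Vset p d" and w: "w \<in> Vset p d" and eq: "T u = T w"
  have "T (vadd p u (vneg p w)) = vadd p (T w) (vneg p (T w))"
    using T(1) u w eq p by (simp add: linear_Fp_def linear_Fp_vneg vneg_in_Vset)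
  then have "vadd p u (vneg p w) = vzero"
    using ker u w p by (simp add: vadd_vneg vadd_in_Vset vneg_in_Vset)
  then show "u = w"
    by (rule eq_if_vadd_vneg_eq_vzero[OF u w])
qed

section \<open>Representations over F_p\<close>

locale fp_rep =
  fixes p d :: nat and D :: "('g, 'b) monoid_scheme"
    and \<psi> :: "'g \<Rightarrow> (nat \<Rightarrow> int) \<Rightarrow> (nat \<Rightarrow> int)"
  assumes p_gt_1: "1 < p" and group_D: "group D" and rep: "is_rep p d D \<psi>"
begin

lemma p_pos: "0 < p"
  using p_gt_1 by simp

abbreviation V where "V \<equiv> Vset p d"
abbreviation G where "G \<equiv> semidirect p d D \<psi>"

lemma rep_in_Vset: "g \<in> carrier D \<Longrightarrow> w \<in> V \<Longrightarrow> \<psi> g w \<in> V"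
  using rep by (auto simp: is_rep_def hom_def BijGroup_def dest: Bij_imp_funcset)

lemma rep_linear: "g \<in> carrier D \<Longrightarrow> linear_Fp p d (\<psi> g)"
  using rep by (simp add: is_rep_def)

lemma rep_vadd:
  "g \<in> carrier D \<Longrightarrow> u \<in> V \<Longrightarrow> w \<in> V \<Longrightarrow> \<psi> g (vadd p u w) = vadd p (\<psi> g u) (\<psi> g w)"
  using rep_linear by (simp add: linear_Fp_def)

lemma rep_vsmult:
  "g \<in> carrier D \<Longrightarrow> c \<in> {0..<int p} \<Longrightarrow> u \<in> V \<Longrightarrow> \<psi> g (vsmult p c u) = vsmult p c (\<psi> g u)"
  using rep_linear by (simp add: linear_Fp_def)

lemma rep_vzero: "g \<in> carrier D \<Longrightarrow> \<psi> g vzero = vzero"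
  using linear_Fp_vzero[OF p_pos rep_linear] .

lemma rep_mult:
  assumes "g \<in> carrier D" "h \<in> carrier D" "w \<in> V"
  shows "\<psi> (g \<otimes>\<^bsub>D\<^esub> h) w = \<psi> g (\<psi> h w)"
proof -
  have "\<psi> \<in> hom D (BijGroup V)"
    using rep by (simp add: is_rep_def)
  then have "\<psi> (g \<otimes>\<^bsub>D\<^esub> h) = compose V (\<psi> g) (\<psi> h)"
    using assms(1,2) by (auto simp: hom_def BijGroup_def)
  then show ?thesis
    using assms(3) by (simp add: compose_def)
qed

lemma rep_one:
  assumes "w \<in> V"
  shows "\<psi> \<one>\<^bsub>D\<^esub> w = w"
proof -
  interpret group_hom D "BijGroup V" \<psi>
    using group_D group_BijGroup rep by (simp add: group_hom_def group_hom_axioms_def is_rep_def)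
  show ?thesis
    using assms by (simp add: BijGroup_def)
qed

lemma semidirect_mult [simp]: "(u, a) \<otimes>\<^bsub>G\<^esub> (w, b) = (vadd p u (\<psi> a w), a \<otimes>\<^bsub>D\<^esub> b)"
  by (simp add: semidirect_def)

lemma semidirect_carrier [simp]: "carrier G = V \<times> carrier D"
  by (simp add: semidirect_def)

lemma semidirect_mult_vzero:
  assumes "u \<in> V" "a \<in> carrier D"
  shows "(u, \<one>\<^bsub>D\<^esub>) \<otimes>\<^bsub>G\<^esub> (vzero, a) = (u, a)"
proof -
  interpret D: group D
    by (rule group_D)
  show ?thesis
    using assms by (simp add: rep_vzero vadd_vzero_right)
qed

lemma group_semidirect: "group G"
proof (rule groupI)
  interpret D: group D
    by (rule group_D)
  show "\<one>\<^bsub>G\<^esub> \<in> carrier G"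
    by (simp add: semidirect_def vzero_in_Vset[OF p_pos])
  fix x y z assume x: "x \<in> carrier G" and y: "y \<in> carrier G" and z: "z \<in> carrier G"
  then show "x \<otimes>\<^bsub>G\<^esub> y \<in> carrier G"
    by (auto simp: vadd_in_Vset[OF p_pos] rep_in_Vset)
  show "x \<otimes>\<^bsub>G\<^esub> y \<otimes>\<^bsub>G\<^esub> z = x \<otimes>\<^bsub>G\<^esub> (y \<otimes>\<^bsub>G\<^esub> z)"
    using x y z by (auto simp: rep_mult rep_vadd rep_in_Vset vadd_assoc D.m_assoc)
  show "\<one>\<^bsub>G\<^esub> \<otimes>\<^bsub>G\<^esub> x = x"
    using x by (auto simp: semidirect_def rep_one vadd_vzero_left)
  obtain u a where ua: "x = (u, a)" "u \<in> V" "a \<in> carrier D"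
    using x by auto
  let ?a = "inv\<^bsub>D\<^esub> a"
  have "(\<psi> ?a (vneg p u), ?a) \<otimes>\<^bsub>G\<^esub> x = (\<psi> ?a (vadd p (vneg p u) u), \<one>\<^bsub>D\<^esub>)"
    using ua by (simp add: rep_mult rep_vadd vneg_in_Vset[OF p_pos])
  also have "\<dots> = \<one>\<^bsub>G\<^esub>"
    using ua by (simp add: vadd_commute vadd_vneg rep_vzero semidirect_def)
  finally show "\<exists>y\<in>carrier G. y \<otimes>\<^bsub>G\<^esub> x = \<one>\<^bsub>G\<^esub>"
    using ua by (intro bexI[of _ "(\<psi> ?a (vneg p u), ?a)"])
      (auto simp: rep_in_Vset vneg_in_Vset[OF p_pos])
qed

lemma centraliser_V_iff:
  assumes "x \<in> carrier D"
  shows "w \<in> centraliser_V p d D \<psi> x \<longleftrightarrow> w \<in> V \<and> \<psi> x w = w"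
proof -
  interpret D: group D
    by (rule group_D)
  have "w \<in> V \<Longrightarrow> vadd p w (\<psi> \<one>\<^bsub>D\<^esub> vzero) = w \<and> vadd p vzero (\<psi> x w) = \<psi> x w"
    using assms by (simp add: rep_vzero vadd_vzero_left[OF rep_in_Vset] vadd_vzero_right)
  then show ?thesis
    using assms by (auto simp: centraliser_V_def)
qed

definition intertwiner :: "((nat \<Rightarrow> int) \<Rightarrow> (nat \<Rightarrow> int)) \<Rightarrow> bool" where
  "intertwiner T \<longleftrightarrow>
     T ` V \<subseteq> V \<and> linear_Fp p d T \<and> (\<forall>g\<in>carrier D. \<forall>w\<in>V. T (\<psi> g w) = \<psi> g (T w))"

lemma intertwiner_zero: "intertwiner (\<lambda>w. vzero)"
  by (simp add: intertwiner_def linear_Fp_def vzero_in_Vset[OF p_pos] rep_vzero vsmult_vzero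
      image_subset_iff vadd_vzero_left[OF vzero_in_Vset[OF p_pos]])

lemma intertwiner_vadd:
  "intertwiner S \<Longrightarrow> intertwiner T \<Longrightarrow> intertwiner (\<lambda>w. vadd p (S w) (T w))"
  by (auto simp: intertwiner_def linear_Fp_vadd vadd_in_Vset[OF p_pos] rep_vadd image_subset_iff)

lemma intertwiner_vsmult:
  "intertwiner T \<Longrightarrow> c \<in> {0..<int p} \<Longrightarrow> intertwiner (\<lambda>w. vsmult p c (T w))"
  by (auto simp: intertwiner_def linear_Fp_vsmult vsmult_in_Vset[OF p_pos] rep_vsmult
      image_subset_iff)

lemma intertwiner_rep_add_rep_inv:
  assumes g: "g \<in> carrier D"
    and conj: "\<forall>h\<in>carrier D. h \<otimes>\<^bsub>D\<^esub> g = g \<otimes>\<^bsub>D\<^esub> h \<or> h \<otimes>\<^bsub>D\<^esub> g = inv\<^bsub>D\<^esub> g \<otimes>\<^bsub>D\<^esub> h"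
  shows "intertwiner (\<lambda>w. vadd p (\<psi> g w) (\<psi> (inv\<^bsub>D\<^esub> g) w))"
proof -
  interpret D: group D
    by (rule group_D)
  have g': "inv\<^bsub>D\<^esub> g \<in> carrier D"
    using g by simp
  have "vadd p (\<psi> (h \<otimes>\<^bsub>D\<^esub> g) w) (\<psi> (h \<otimes>\<^bsub>D\<^esub> inv\<^bsub>D\<^esub> g) w)
      = vadd p (\<psi> (g \<otimes>\<^bsub>D\<^esub> h) w) (\<psi> (inv\<^bsub>D\<^esub> g \<otimes>\<^bsub>D\<^esub> h) w)"
    if h: "h \<in> carrier D" and w: "w \<in> V" for h w
    using conj[rule_format, OF h]
  proof
    assume "h \<otimes>\<^bsub>D\<^esub> g = g \<otimes>\<^bsub>D\<^esub> h"
    then have "h \<otimes>\<^bsub>D\<^esub> inv\<^bsub>D\<^esub> g = inv\<^bsub>D\<^esub> g \<otimes>\<^bsub>D\<^esub> (h \<otimes>\<^bsub>D\<^esub> g) \<otimes>\<^bsub>D\<^esub> inv\<^bsub>D\<^esub> g"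
      using g h by (simp add: D.m_assoc[symmetric])
    also have "\<dots> = inv\<^bsub>D\<^esub> g \<otimes>\<^bsub>D\<^esub> h"
      using g h by (simp add: D.m_assoc)
    finally have "h \<otimes>\<^bsub>D\<^esub> inv\<^bsub>D\<^esub> g = inv\<^bsub>D\<^esub> g \<otimes>\<^bsub>D\<^esub> h" .
    with \<open>h \<otimes>\<^bsub>D\<^esub> g = g \<otimes>\<^bsub>D\<^esub> h\<close> show ?thesis
      by simp
  next
    assume "h \<otimes>\<^bsub>D\<^esub> g = inv\<^bsub>D\<^esub> g \<otimes>\<^bsub>D\<^esub> h"
    then have "h \<otimes>\<^bsub>D\<^esub> inv\<^bsub>D\<^esub> g = g \<otimes>\<^bsub>D\<^esub> (h \<otimes>\<^bsub>D\<^esub> g) \<otimes>\<^bsub>D\<^esub> inv\<^bsub>D\<^esub> g"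
      using g h by (simp add: D.m_assoc[symmetric])
    also have "\<dots> = g \<otimes>\<^bsub>D\<^esub> h"
      using g h by (simp add: D.m_assoc)
    finally have "h \<otimes>\<^bsub>D\<^esub> inv\<^bsub>D\<^esub> g = g \<otimes>\<^bsub>D\<^esub> h" .
    with \<open>h \<otimes>\<^bsub>D\<^esub> g = inv\<^bsub>D\<^esub> g \<otimes>\<^bsub>D\<^esub> h\<close> show ?thesis
      by (simp add: vadd_commute)
  qed
  then show ?thesis
    using g g' rep_linear
    by (auto simp: intertwiner_def linear_Fp_vadd vadd_in_Vset[OF p_pos] rep_in_Vset rep_vadd
        rep_mult)
qed

definition commutant_orbit :: "(nat \<Rightarrow> int) \<Rightarrow> (nat \<Rightarrow> int) set" where
  "commutant_orbit v = {T v | T. intertwiner T}"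

lemma intertwiner_vzero: "intertwiner T \<Longrightarrow> T vzero = vzero"
  unfolding intertwiner_def by (blast intro: linear_Fp_vzero[OF p_pos])

lemma intertwiner_in_commutant_orbit: "intertwiner T \<Longrightarrow> T v \<in> commutant_orbit v"
  unfolding commutant_orbit_def by blast

lemma subspace_commutant_orbit:
  assumes v: "v \<in> V"
  shows "subspace_Fp p d (commutant_orbit v)"
  unfolding subspace_Fp_def
proof (intro conjI ballI)
  show "commutant_orbit v \<subseteq> V"
    using v by (auto simp: commutant_orbit_def intertwiner_def)
  show "vzero \<in> commutant_orbit v"
    using intertwiner_zero unfolding commutant_orbit_def by fastforce
  show "vadd p a b \<in> commutant_orbit v"
    if "a \<in> commutant_orbit v" "b \<in> commutant_orbit v" for a b
    using that intertwiner_vadd unfolding commutant_orbit_def by fastforce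
  show "vsmult p c a \<in> commutant_orbit v"
    if "c \<in> {0..<int p}" "a \<in> commutant_orbit v" for c a
    using that intertwiner_vsmult unfolding commutant_orbit_def by fastforce
qed

lemma irreducible_linear_image_subset:
  assumes irr: "irreducible_rep p d D \<psi>" and v: "v \<in> V" "v \<noteq> vzero"
    and L: "linear_Fp p d L" and S: "subspace_Fp p d S"
    and orbit: "\<forall>g\<in>carrier D. L (\<psi> g v) \<in> S"
  shows "L ` V \<subseteq> S"
proof -
  interpret D: group D
    by (rule group_D)
  define U where "U = {w \<in> V. \<forall>g\<in>carrier D. L (\<psi> g w) \<in> S}"
  have "subspace_Fp p d U"
    unfolding subspace_Fp_def
  proof (intro conjI ballI)
    show "U \<subseteq> V"
      by (auto simp: U_def)
    show "vzero \<in> U"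
      using S
      by (simp add: U_def subspace_Fp_def vzero_in_Vset[OF p_pos] rep_vzero
          linear_Fp_vzero[OF p_pos L])
    show "vadd p u w \<in> U" if "u \<in> U" "w \<in> U" for u w
      using that S L
      by (auto simp: U_def subspace_Fp_def linear_Fp_def rep_vadd rep_in_Vset
          vadd_in_Vset[OF p_pos])
    show "vsmult p c u \<in> U" if "c \<in> {0..<int p}" "u \<in> U" for c u
      using that S L
      by (auto simp: U_def subspace_Fp_def linear_Fp_def rep_vsmult rep_in_Vset
          vsmult_in_Vset[OF p_pos])
  qed
  moreover have "\<psi> g ` U \<subseteq> U" if "g \<in> carrier D" for g
    using that by (auto simp: U_def rep_in_Vset rep_mult[symmetric])
  ultimately have "U = {vzero} \<or> U = V"
    using irr by (simp add: irreducible_rep_def)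
  moreover have "v \<in> U"
    using v orbit by (simp add: U_def)
  ultimately have "U = V"
    using v(2) by auto
  show ?thesis
  proof
    fix u assume "u \<in> L ` V"
    then obtain w where w: "w \<in> V" "u = L w"
      by blast
    have "L (\<psi> \<one>\<^bsub>D\<^esub> w) \<in> S"
      using \<open>U = V\<close> w(1) unfolding U_def by blast
    then show "u \<in> S"
      using w by (simp add: rep_one)
  qed
qed

lemma intertwiner_bij:
  assumes irr: "irreducible_rep p d D \<psi>" and T: "intertwiner T"
    and v: "v \<in> V" "T v \<noteq> vzero"
  shows "bij_betw T V V"
proof -
  have lin: "linear_Fp p d T" and TV: "T ` V \<subseteq> V"
    using T by (auto simp: intertwiner_def)
  let ?K = "{w \<in> V. T w = vzero}"
  have "\<psi> g ` ?K \<subseteq> ?K" if "g \<in> carrier D" for g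
    using that T by (auto simp: intertwiner_def rep_in_Vset rep_vzero)
  then have "?K = {vzero} \<or> ?K = V"
    using irr subspace_Fp_kernel[OF p_pos lin] by (simp add: irreducible_rep_def)
  then have "?K = {vzero}"
    using v by auto
  then have "inj_on T V"
    by (intro linear_Fp_inj_on[OF p_pos lin TV]) auto
  then show ?thesis
    using endo_inj_surj[OF finite_Vset TV] by (simp add: bij_betw_def)
qed

lemma semidirect_automorphism:
  assumes T: "intertwiner T" "bij_betw T V V"
  shows "map_prod T id \<in> iso G G"
proof (rule isoI)
  show "map_prod T id \<in> hom G G"
  proof (rule homI)
    fix x y assume "x \<in> carrier G" "y \<in> carrier G"
    then show "map_prod T id x \<in> carrier G"
      "map_prod T id (x \<otimes>\<^bsub>G\<^esub> y) = map_prod T id x \<otimes>\<^bsub>G\<^esub> map_prod T id y"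
      using T(1) by (auto simp: intertwiner_def linear_Fp_def rep_in_Vset)
  qed
  show "bij_betw (map_prod T id) (carrier G) (carrier G)"
    using bij_betw_map_prod[OF T(2) bij_betw_id] by simp
qed

lemma intertwiner_rota_map_iso:
  assumes irr: "irreducible_rep p d D \<psi>" and T: "intertwiner T"
    and u: "u \<in> V" "T u \<noteq> vzero" and ab: "a \<in> carrier D" "b \<in> carrier D"
  shows "rota_map_iso G (u, a) (vzero, b) G (T u, a) (vzero, b)"
proof -
  have "map_prod T id \<in> iso G G"
    using semidirect_automorphism[OF T intertwiner_bij[OF irr T u]] .
  moreover have "(u, a) \<in> carrier G" "(vzero, b) \<in> carrier G"
    using u ab vzero_in_Vset[OF p_pos] by auto
  ultimately show ?thesis
    using rota_map_iso_by_iso[OF group_semidirect group_semidirect] intertwiner_vzero[OF T]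
    by fastforce
qed

end

section \<open>Representations of the dihedral group\<close>

locale dihedral_fp_rep = fp_rep p d "dihedral r" \<psi> for p d r \<psi>
begin

lemma r_pos: "0 < r"
proof -
  interpret group "dihedral r"
    by (rule group_D)
  show ?thesis
    using one_closed by (simp add: dihedral_one dihedral_carrier)
qed

lemma rotation_conjugates:
  assumes "g \<in> carrier (dihedral r)" "\<not> snd g"
  shows "\<forall>h\<in>carrier (dihedral r). h \<otimes>\<^bsub>dihedral r\<^esub> g = g \<otimes>\<^bsub>dihedral r\<^esub> h
      \<or> h \<otimes>\<^bsub>dihedral r\<^esub> g = inv\<^bsub>dihedral r\<^esub> g \<otimes>\<^bsub>dihedral r\<^esub> h"
  using assms dihedral_rotations_commute dihedral_reflection_inverts_rotation[OF r_pos] by blast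

lemma reflection_sum_in_commutant_orbit:
  assumes x: "x \<in> carrier (dihedral r)" "snd x" and v: "v \<in> V" "\<psi> x v = v"
    and g: "g \<in> carrier (dihedral r)"
  shows "vadd p (\<psi> g v) (\<psi> x (\<psi> g v)) \<in> commutant_orbit v"
proof -
  interpret D: group "dihedral r"
    by (rule group_D)
  obtain k where k: "k \<in> carrier (dihedral r)" "\<not> snd k" "\<psi> k v = \<psi> g v"
    "\<psi> (inv\<^bsub>dihedral r\<^esub> k) v = \<psi> x (\<psi> g v)"
  proof (cases "snd g")
    case True
    have k: "g \<otimes>\<^bsub>dihedral r\<^esub> x \<in> carrier (dihedral r)"
      using g x(1) by (rule D.m_closed)
    have "inv\<^bsub>dihedral r\<^esub> (g \<otimes>\<^bsub>dihedral r\<^esub> x) = x \<otimes>\<^bsub>dihedral r\<^esub> g"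
      using x g True by (simp add: D.inv_mult_group dihedral_reflection_inv[OF r_pos])
    then show ?thesis
      using rep_mult[OF g x(1) v(1)] rep_mult[OF x(1) g v(1)] v(2) True x(2)
      by (intro that[OF k]) simp_all
  next
    case False
    have "\<psi> (inv\<^bsub>dihedral r\<^esub> g) v = \<psi> (inv\<^bsub>dihedral r\<^esub> g \<otimes>\<^bsub>dihedral r\<^esub> x) v"
      using rep_mult[OF D.inv_closed[OF g] x(1) v(1)] v(2) by simp
    also have "\<dots> = \<psi> x (\<psi> g v)"
      using dihedral_reflection_inverts_rotation[OF r_pos g False x] rep_mult[OF x(1) g v(1)]
      by simp
    finally show ?thesis
      using g False by (intro that[of g]) simp_all
  qed
  have "(\<lambda>w. vadd p (\<psi> k w) (\<psi> (inv\<^bsub>dihedral r\<^esub> k) w)) v \<in> commutant_orbit v"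
    using k(1,2)
    by (intro intertwiner_in_commutant_orbit intertwiner_rep_add_rep_inv rotation_conjugates)
  then show ?thesis
    using k(3,4) by simp
qed

lemma centraliser_subset_commutant_orbit:
  assumes irr: "irreducible_rep p d (dihedral r) \<psi>" and p: "odd p"
    and x: "x \<in> carrier (dihedral r)" "snd x"
    and v: "v \<in> centraliser_V p d (dihedral r) \<psi> x" "v \<noteq> vzero"
    and v': "v' \<in> centraliser_V p d (dihedral r) \<psi> x"
  shows "v' \<in> commutant_orbit v"
proof -
  have vV: "v \<in> V" "\<psi> x v = v" and v'V: "v' \<in> V" "\<psi> x v' = v'"
    using v(1) v' centraliser_V_iff[OF x(1)] by auto
  have "(\<lambda>w. vadd p w (\<psi> x w)) ` V \<subseteq> commutant_orbit v"
    using reflection_sum_in_commutant_orbit[OF x vV]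
    by (intro irreducible_linear_image_subset[OF irr vV(1) v(2)] linear_Fp_vadd linear_Fp_id
        rep_linear x(1) subspace_commutant_orbit vV(1)) auto
  then have "vadd p v' v' \<in> commutant_orbit v"
    using v'V by force
  moreover have "(int p + 1) div 2 \<in> {0..<int p}"
    using p_gt_1 by auto
  ultimately have "vsmult p ((int p + 1) div 2) (vadd p v' v') \<in> commutant_orbit v"
    using subspace_commutant_orbit[OF vV(1)] by (simp add: subspace_Fp_def)
  then show ?thesis
    using vsmult_half_vadd_self[OF p v'V(1)] by simp
qed

end

theorem proposition3p2:
  fixes p r d :: nat
    and \<psi> :: "nat \<times> bool \<Rightarrow> (nat \<Rightarrow> int) \<Rightarrow> (nat \<Rightarrow> int)"
    and x y :: "nat \<times> bool"
    and v v' :: "nat \<Rightarrow> int"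
  assumes "Factorial_Ring.prime p" and "odd p"
    and "r \<ge> 3" and "\<not> p dvd r"
    and "d \<ge> 2"
    and "irreducible_rep p d (dihedral r) \<psi>"
    and "involution (dihedral r) x" and "involution (dihedral r) y"
    and "generate (dihedral r) {x, y} = carrier (dihedral r)"
    and "v \<in> centraliser_V p d (dihedral r) \<psi> x" and "v \<noteq> vzero"
    and "v' \<in> centraliser_V p d (dihedral r) \<psi> x" and "v' \<noteq> vzero"
  shows "rota_map_iso
           (semidirect p d (dihedral r) \<psi>)
           ((v, \<one>\<^bsub>dihedral r\<^esub>) \<otimes>\<^bsub>semidirect p d (dihedral r) \<psi>\<^esub> (vzero, x))
           (vzero, y)
           (semidirect p d (dihedral r) \<psi>)
           ((v', \<one>\<^bsub>dihedral r\<^esub>) \<otimes>\<^bsub>semidirect p d (dihedral r) \<psi>\<^esub> (vzero, x))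
           (vzero, y)"
proof -
  have "1 < p"
    using assms(1) by (rule prime_gt_1_nat)
  moreover have "group (dihedral r)"
    using assms(3) by (simp add: group_dihedral)
  moreover have "is_rep p d (dihedral r) \<psi>"
    using assms(6) by (simp add: irreducible_rep_def)
  ultimately interpret dihedral_fp_rep p d r \<psi>
    by (simp add: dihedral_fp_rep_def fp_rep_def)
  have x: "x \<in> carrier (dihedral r)" "snd x"
    using assms(7) dihedral_generating_involution_reflection[OF assms(3,7-9)]
    by (auto simp: involution_def)
  have vV: "v \<in> V" "v' \<in> V"
    using assms(10,12) centraliser_V_iff[OF x(1)] by auto
  obtain T where T: "intertwiner T" "T v = v'"
    using centraliser_subset_commutant_orbit[OF assms(6,2) x assms(10,11,12)]
    by (auto simp: commutant_orbit_def)
  have "rota_map_iso G (v, x) (vzero, y) G (v', x) (vzero, y)"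
    using intertwiner_rota_map_iso[OF assms(6) T(1) vV(1) _ x(1), of y] T(2) assms(8,13)
    by (simp add: involution_def)
  then show ?thesis
    unfolding semidirect_mult_vzero[OF vV(1) x(1)] semidirect_mult_vzero[OF vV(2) x(1)] .
qed

end
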